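(* Let $(X,d)$ be a metric space, $\alpha:X\times X\rightarrow[0,+\infty)$ and $T:X\rightarrow X$. Assume that $T$ is $\alpha$--admissible and $\alpha$--contractive of Meir--Keeler type. Let $x,y\in X$ with $\alpha(x,y)\geq1$. Then $\alpha(T^{n}x,T^{n}y)\geq1$ for all $n\in\mathbb{N}$, the sequence $\{d(T^{n}x,T^{n}y)\}_{n}$ is nonincreasing, and $d(T^{n}x,T^{n}y)\rightarrow0$ as $n\rightarrow\infty$.
   Context: $\mathbb{N}$ denotes the set of non-negative integers and $T^n$ is the $n$-th iterate of $T$ ($T^0$ the identity). $T$ is called an $\alpha$--contractive mapping of Meir--Keeler type if for every $\varepsilon>0$ there exists $\delta(\varepsilon)>0$ such that for all $x,y\in X$: $\varepsilon\leq d(x,y)<\varepsilon+\delta(\varepsilon)$ implies $\alpha(x,y)\,d(Tx,Ty)<\varepsilon$. $T$ is called $\alpha$--admissible if for all $x,y\in X$, $\alpha(x,y)\geq1$ implies $\alpha(Tx,Ty)\geq1$. *)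

theory Defs
  imports "HOL-Analysis.Analysis"
begin

definition alpha_admissible :: "('a \<Rightarrow> 'a \<Rightarrow> real) \<Rightarrow> ('a \<Rightarrow> 'a) \<Rightarrow> bool" where
  "alpha_admissible \<alpha> T \<longleftrightarrow> (\<forall>x y. \<alpha> x y \<ge> 1 \<longrightarrow> \<alpha> (T x) (T y) \<ge> 1)"

definition alpha_meir_keeler :: "('a::metric_space \<Rightarrow> 'a \<Rightarrow> real) \<Rightarrow> ('a \<Rightarrow> 'a) \<Rightarrow> bool" where
  "alpha_meir_keeler \<alpha> T \<longleftrightarrow>
     (\<forall>\<epsilon>>0. \<exists>\<delta>>0. \<forall>x y. \<epsilon> \<le> dist x y \<and> dist x y < \<epsilon> + \<delta> \<longrightarrow>
        \<alpha> x y * dist (T x) (T y) < \<epsilon>)"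

end

theory Submission
  imports Defs
begin

text \<open>Admissibility propagates \<open>\<alpha> \<ge> 1\<close> along the two orbits. On such pairs the weight \<open>\<alpha>\<close>
  can only enlarge \<open>d(Tu, Tv)\<close>, so the Meir--Keeler condition holds for \<open>T\<close> itself; in particular
  \<open>T\<close> strictly shrinks positive distances and the orbit distances decrease. Their limit \<open>L\<close> is
  approached from above, so if \<open>L > 0\<close> some distance falls into \<open>[L, L + \<delta>)\<close> and the next one
  drops below \<open>L\<close>, a contradiction.\<close>

lemma alpha_admissible_funpow:
  assumes "alpha_admissible \<alpha> T" and "\<alpha> x y \<ge> 1"
  shows "\<alpha> ((T ^^ n) x) ((T ^^ n) y) \<ge> 1"
  using assms by (induction n) (auto simp: alpha_admissible_def)

lemma alpha_meir_keeler_dist_less: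
  assumes "alpha_meir_keeler \<alpha> T" and "\<epsilon> > 0"
  obtains \<delta> where "\<delta> > 0"
    and "\<And>u v. \<alpha> u v \<ge> 1 \<Longrightarrow> \<epsilon> \<le> dist u v \<Longrightarrow> dist u v < \<epsilon> + \<delta> \<Longrightarrow> dist (T u) (T v) < \<epsilon>"
proof -
  from assms obtain \<delta> where "\<delta> > 0" and MK:
    "\<And>u v. \<epsilon> \<le> dist u v \<Longrightarrow> dist u v < \<epsilon> + \<delta> \<Longrightarrow> \<alpha> u v * dist (T u) (T v) < \<epsilon>"
    unfolding alpha_meir_keeler_def by blast
  have "dist (T u) (T v) < \<epsilon>"
    if "\<alpha> u v \<ge> 1" "\<epsilon> \<le> dist u v" "dist u v < \<epsilon> + \<delta>" for u v
  proof -
    have "dist (T u) (T v) \<le> \<alpha> u v * dist (T u) (T v)"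
      using \<open>\<alpha> u v \<ge> 1\<close> by (simp add: mult_le_cancel_right1)
    also have "\<dots> < \<epsilon>" using MK that(2,3) .
    finally show ?thesis .
  qed
  with \<open>\<delta> > 0\<close> show thesis by (rule that)
qed

lemma alpha_meir_keeler_dist_le:
  assumes "alpha_meir_keeler \<alpha> T" and "\<alpha> u v \<ge> 1"
  shows "dist (T u) (T v) \<le> dist u v"
proof (cases "dist u v = 0")
  case False
  then have "dist u v > 0" by simp
  with assms(1) obtain \<delta> where "\<delta> > 0" and
    "\<And>u' v'. \<alpha> u' v' \<ge> 1 \<Longrightarrow> dist u v \<le> dist u' v' \<Longrightarrow> dist u' v' < dist u v + \<delta>
       \<Longrightarrow> dist (T u') (T v') < dist u v"
    using alpha_meir_keeler_dist_less by blast
  with assms(2) show ?thesis by fastforce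
qed simp

lemma decseq_meir_keeler_tendsto_zero:
  fixes d :: "nat \<Rightarrow> real"
  assumes "decseq d" and "\<And>n. d n \<ge> 0"
    and "\<And>\<epsilon>. \<epsilon> > 0 \<Longrightarrow> \<exists>\<delta>>0. \<forall>n. \<epsilon> \<le> d n \<and> d n < \<epsilon> + \<delta> \<longrightarrow> d (Suc n) < \<epsilon>"
  shows "d \<longlonglongrightarrow> 0"
proof -
  obtain L where lim: "d \<longlonglongrightarrow> L" and above: "\<And>n. L \<le> d n"
    using decseq_convergent[OF assms(1), of 0] assms(2) by blast
  have "L \<ge> 0" using lim by (rule LIMSEQ_le_const) (use assms(2) in blast)
  have "L = 0"
  proof (rule ccontr)
    assume "L \<noteq> 0"
    with \<open>L \<ge> 0\<close> have "L > 0" by simp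
    with assms(3) obtain \<delta> where "\<delta> > 0" and drop: "\<forall>n. L \<le> d n \<and> d n < L + \<delta> \<longrightarrow> d (Suc n) < L"
      by blast
    from lim \<open>\<delta> > 0\<close> obtain N where "\<forall>n\<ge>N. dist (d n) L < \<delta>"
      unfolding lim_sequentially by blast
    then have "d N < L + \<delta>" by (auto simp: dist_real_def)
    with drop above have "d (Suc N) < L" by blast
    with above show False by (meson not_le)
  qed
  with lim show ?thesis by simp
qed

theorem lemma2:
  fixes \<alpha> :: "'a::metric_space \<Rightarrow> 'a \<Rightarrow> real" and T :: "'a \<Rightarrow> 'a" and x y :: 'a
  assumes "\<And>u v. \<alpha> u v \<ge> 0"
    and "alpha_admissible \<alpha> T"
    and "alpha_meir_keeler \<alpha> T"
    and "\<alpha> x y \<ge> 1"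
  shows "(\<forall>n. \<alpha> ((T ^^ n) x) ((T ^^ n) y) \<ge> 1)
    \<and> decseq (\<lambda>n. dist ((T ^^ n) x) ((T ^^ n) y))
    \<and> (\<lambda>n. dist ((T ^^ n) x) ((T ^^ n) y)) \<longlonglongrightarrow> 0"
proof -
  define d where "d n = dist ((T ^^ n) x) ((T ^^ n) y)" for n
  have admissible: "\<alpha> ((T ^^ n) x) ((T ^^ n) y) \<ge> 1" for n
    using assms(2,4) by (rule alpha_admissible_funpow)
  have "decseq d"
    unfolding decseq_Suc_iff d_def
    using alpha_meir_keeler_dist_le[OF assms(3) admissible] by simp
  moreover have "\<exists>\<delta>>0. \<forall>n. \<epsilon> \<le> d n \<and> d n < \<epsilon> + \<delta> \<longrightarrow> d (Suc n) < \<epsilon>" if "\<epsilon> > 0" for \<epsilon>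
  proof -
    obtain \<delta> where "\<delta> > 0" and "\<And>u v. \<alpha> u v \<ge> 1 \<Longrightarrow> \<epsilon> \<le> dist u v \<Longrightarrow> dist u v < \<epsilon> + \<delta>
        \<Longrightarrow> dist (T u) (T v) < \<epsilon>"
      using alpha_meir_keeler_dist_less[OF assms(3) \<open>\<epsilon> > 0\<close>] by blast
    with admissible show ?thesis by (auto simp: d_def)
  qed
  ultimately have "d \<longlonglongrightarrow> 0"
    by (intro decseq_meir_keeler_tendsto_zero) (auto simp: d_def)
  with admissible \<open>decseq d\<close> show ?thesis unfolding d_def by blast
qed

end
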